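(* Let $(c_d)_{d\ge 0}$ be nonnegative integers, $(p_d)_{d\ge0}\subset[0,1]$, and for each $d\ge 0$ let $F_d$ be a cumulative distribution function of a random variable taking values in the nonnegative integers $\{0,1,2,\dots\}$. For each $t\in\mathbb{N}$, let $\{M_{d,i}(t)\}$, $0\le d\le t$, $1\le i\le c_d$, be independent random variables with $M_{d,i}(t)\sim \mathrm{Bernoulli}\big(p_d F_d(t-d)\big)$. Let $r_t=\sum_{d=0}^t c_d$ and assume $r_t\to\infty$ as $t\to\infty$. Define $$CFR(t)=\frac{1}{r_t}\sum_{d=0}^t \frac{\sum_{i=1}^{c_d} M_{d,i}(t)}{F_d(t-d)},\qquad cfr(t)=\frac{\sum_{d=0}^t c_d p_d}{r_t},$$ $$V(CFR(t))=\frac{\sum_{d=0}^t c_d\, p_d\big(1-p_dF_d(t-d)\big)/F_d(t-d)}{r_t^2}.$$ Consider the assumptions (A1) $\inf_{d} F_d(0)=D>0$; (A2) $\inf_d p_d = I>0$; (A3) $\sup_d p_d = S<1$. Then: (i) If (A1) holds, then $CFR(t)-cfr(t)\to 0$ in probability as $t\to\infty$. (ii) If (A1), (A2) and (A3) hold, then $\dfrac{CFR(t)-cfr(t)}{\sqrt{V(CFR(t))}}$ converges in distribution to the standard normal distribution $N(0,1)$ as $t\to\infty$.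
   Context: Interpretation (for orientation only): $c_d$ is the number of cases of a disease confirmed on day $d$, $p_d$ is the probability of eventually dying from the disease for a case confirmed on day $d$, $F_d$ is the distribution function of the number of days from confirmation to death for cases confirmed on day $d$ that die, and $M_{d,i}(t)$ indicates whether the $i$-th case confirmed on day $d$ has died of the disease by day $t$. The quantity $cfr(t)$ is the case fatality rate by day $t$ and $CFR(t)$ is its proposed estimator; $V(CFR(t))$ equals the variance of $CFR(t)$. Under (A1), $F_d(t-d)\ge F_d(0)>0$, so $CFR(t)$ is well defined. *)

theory Defs
  imports "HOL-Probability.Probability"
begin

definition nat_cdf :: "nat pmf \<Rightarrow> nat \<Rightarrow> real" where
  "nat_cdf Q k = measure_pmf.prob Q {..k}"

definition rcases :: "(nat \<Rightarrow> nat) \<Rightarrow> nat \<Rightarrow> nat" where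
  "rcases c t = (\<Sum>d\<le>t. c d)"

text \<open>The estimator CFR(t); X t d i is the indicator M_{d,i}(t) (as a boolean).\<close>
definition CFR_est :: "(nat \<Rightarrow> nat) \<Rightarrow> (nat \<Rightarrow> nat \<Rightarrow> real)
    \<Rightarrow> (nat \<Rightarrow> nat \<Rightarrow> nat \<Rightarrow> 'a \<Rightarrow> bool) \<Rightarrow> nat \<Rightarrow> 'a \<Rightarrow> real" where
  "CFR_est c F X t \<omega> =
     (\<Sum>d\<le>t. (\<Sum>i=1..c d. of_bool (X t d i \<omega>)) / F d (t - d)) / real (rcases c t)"

definition cfr_true :: "(nat \<Rightarrow> nat) \<Rightarrow> (nat \<Rightarrow> real) \<Rightarrow> nat \<Rightarrow> real" where
  "cfr_true c p t = (\<Sum>d\<le>t. real (c d) * p d) / real (rcases c t)"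

definition V_CFR :: "(nat \<Rightarrow> nat) \<Rightarrow> (nat \<Rightarrow> real) \<Rightarrow> (nat \<Rightarrow> nat \<Rightarrow> real) \<Rightarrow> nat \<Rightarrow> real" where
  "V_CFR c p F t =
     (\<Sum>d\<le>t. real (c d) * p d * (1 - p d * F d (t - d)) / F d (t - d)) / (real (rcases c t))\<^sup>2"

end

theory Submission
  imports Defs
begin

text \<open>
  Put \<open>q\<^sub>d = p\<^sub>d F\<^sub>d(t - d)\<close>. Then \<open>CFR(t) - cfr(t)\<close> is the sum over the confirmed cases \<open>(d, i)\<close>
  of \<open>(M\<^sub>d\<^sub>i(t) - q\<^sub>d) / (F\<^sub>d(t - d) r\<^sub>t)\<close>: a weighted sum of independent centred Bernoulli
  variables whose weights are at most \<open>1 / (D r\<^sub>t)\<close> by (A1), and \<open>V(CFR(t))\<close> is exactly its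
  variance. Part (i) is then Hoeffding's inequality, which bounds the probability of a deviation
  larger than \<open>e\<close> by \<open>2 exp (- 2 e\<^sup>2 D\<^sup>2 r\<^sub>t)\<close>.

  For part (ii), (A2) and (A3) give \<open>V(CFR(t)) \<ge> I (1 - S) / r\<^sub>t\<close>, so the weights of the
  standardised sum are at most \<open>\<beta>\<^sub>t = 1 / (D sqrt (I (1 - S) r\<^sub>t))\<close>, which tends to \<open>0\<close>.
  Comparing each factor of its characteristic function with the matching Gaussian factor through a
  third-order Taylor expansion (a Lyapunov-type estimate) yields
  \<open>|\<phi>\<^sub>t(u) - exp (- u\<^sup>2 / 2)| \<le> |u|\<^sup>3 \<beta>\<^sub>t / 6 + u\<^sup>4 \<beta>\<^sub>t\<^sup>2\<close>,
  and Levy's continuity theorem concludes.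
\<close>

lemma norm_iexp_minus_taylor2_le:
  "cmod (iexp x - (1 + \<i> * complex_of_real x - complex_of_real (x^2 / 2))) \<le> \<bar>x\<bar>^3 / 6"
proof -
  have "(\<Sum>k\<le>2. (\<i> * complex_of_real x)^k / fact k)
      = 1 + \<i> * complex_of_real x - complex_of_real (x^2 / 2)"
    by (simp add: numeral_2_eq_2 power2_eq_square field_simps)
  moreover have "fact (Suc 2) = (6::real)"
    by (simp add: numeral_3_eq_3 numeral_2_eq_2)
  ultimately show ?thesis
    using iexp_approx1[of x 2] by (simp add: numeral_3_eq_3)
qed

lemma abs_exp_neg_minus_taylor1_le:
  fixes y :: real
  assumes "0 \<le> y"
  shows "\<bar>exp (- y) - (1 - y)\<bar> \<le> y^2"
proof -
  have "1 - y \<le> exp (- y)"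
    using exp_ge_add_one_self[of "- y"] by simp
  moreover have "exp (- y) \<le> 1 / (1 + y)"
    using exp_ge_add_one_self[of y] assms by (simp add: exp_minus field_simps)
  moreover have "1 / (1 + y) - (1 - y) = y^2 / (1 + y)"
    using assms by (simp add: field_simps power2_eq_square)
  moreover have "y^2 / (1 + y) \<le> y^2"
    using assms by (simp add: divide_le_eq algebra_simps)
  ultimately show ?thesis
    by linarith
qed

text \<open>The characteristic function at \<open>u\<close> of \<open>a (B - q)\<close> for \<open>B \<sim> Bernoulli(q)\<close>.\<close>
definition centred_bernoulli_char :: "real \<Rightarrow> real \<Rightarrow> real \<Rightarrow> complex" where
  "centred_bernoulli_char q a u =
     complex_of_real (1 - q) * iexp (- (u * a * q)) + complex_of_real q * iexp (u * a * (1 - q))"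

lemma norm_centred_bernoulli_char_le_1:
  assumes "0 \<le> q" "q \<le> 1"
  shows "cmod (centred_bernoulli_char q a u) \<le> 1"
proof -
  have "cmod (centred_bernoulli_char q a u)
      \<le> cmod (complex_of_real (1 - q) * iexp (- (u * a * q)))
         + cmod (complex_of_real q * iexp (u * a * (1 - q)))"
    unfolding centred_bernoulli_char_def by (rule norm_triangle_ineq)
  also have "\<dots> = 1"
    using assms by (simp only: norm_mult norm_of_real norm_exp_i_times) simp
  finally show ?thesis .
qed

lemma norm_centred_bernoulli_char_minus_quadratic_le:
  assumes q: "0 \<le> q" "q \<le> 1"
  shows "cmod (centred_bernoulli_char q a u - complex_of_real (1 - u^2 * (a^2 * q * (1 - q)) / 2))
           \<le> \<bar>u\<bar>^3 * \<bar>a\<bar> * (a^2 * q * (1 - q)) / 6"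
proof -
  define R where "R x = iexp x - (1 + \<i> * complex_of_real x - complex_of_real (x^2 / 2))" for x
  have R_le: "cmod (R x) \<le> \<bar>x\<bar>^3 / 6" for x
    unfolding R_def by (rule norm_iexp_minus_taylor2_le)
  text \<open>The second-order Taylor polynomials average out to the quadratic, since the
    variable has mean \<open>0\<close> and variance \<open>a\<^sup>2 q (1 - q)\<close>.\<close>
  have "cmod (centred_bernoulli_char q a u - complex_of_real (1 - u^2 * (a^2 * q * (1 - q)) / 2))
      = cmod (complex_of_real (1 - q) * R (- (u * a * q)) + complex_of_real q * R (u * a * (1 - q)))"
    unfolding R_def centred_bernoulli_char_def
    by (intro arg_cong[where f = cmod]) (simp add: field_simps power2_eq_square)
  also have "\<dots> \<le> cmod (complex_of_real (1 - q) * R (- (u * a * q)))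
                    + cmod (complex_of_real q * R (u * a * (1 - q)))"
    by (rule norm_triangle_ineq)
  also have "\<dots> = (1 - q) * cmod (R (- (u * a * q))) + q * cmod (R (u * a * (1 - q)))"
    using q by (simp only: norm_mult norm_of_real abs_of_nonneg diff_ge_0_iff_ge)
  also have "\<dots> \<le> (1 - q) * (\<bar>- (u * a * q)\<bar>^3 / 6) + q * (\<bar>u * a * (1 - q)\<bar>^3 / 6)"
    using q by (intro add_mono mult_left_mono R_le) auto
  also have "\<dots> = \<bar>u\<bar>^3 * \<bar>a\<bar>^3 * (q * (1 - q)) * (q^2 + (1 - q)^2) / 6"
  proof -
    have "\<bar>- (u * a * q)\<bar> = \<bar>u\<bar> * \<bar>a\<bar> * q" "\<bar>u * a * (1 - q)\<bar> = \<bar>u\<bar> * \<bar>a\<bar> * (1 - q)"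
      using q by (simp_all add: abs_mult)
    moreover have "(1 - q) * ((U * A * q)^3 / 6) + q * ((U * A * (1 - q))^3 / 6)
        = U^3 * A^3 * (q * (1 - q)) * (q^2 + (1 - q)^2) / 6" for U A :: real
      by (simp add: power3_eq_cube power2_eq_square field_simps)
    ultimately show ?thesis
      by simp
  qed
  also have "\<dots> \<le> \<bar>u\<bar>^3 * \<bar>a\<bar>^3 * (q * (1 - q)) * 1 / 6"
  proof -
    have "0 \<le> q * (1 - q)"
      using q by simp
    then have "q^2 + (1 - q)^2 \<le> 1"
      by (simp add: power2_eq_square algebra_simps)
    then show ?thesis
      using q by (intro divide_right_mono mult_left_mono) auto
  qed
  also have "\<dots> = \<bar>u\<bar>^3 * \<bar>a\<bar> * (a^2 * q * (1 - q)) / 6"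
    by (simp add: power3_eq_cube power2_eq_square)
  finally show ?thesis .
qed

lemma norm_centred_bernoulli_char_minus_gaussian_le:
  assumes q: "0 \<le> q" "q \<le> 1" and a: "\<bar>a\<bar> \<le> \<beta>"
  defines "s \<equiv> a^2 * q * (1 - q)"
  shows "cmod (centred_bernoulli_char q a u - complex_of_real (exp (- (u^2 * s / 2))))
           \<le> (\<bar>u\<bar>^3 * \<beta> / 6 + u^4 * \<beta>^2) * s"
proof -
  have s_nonneg: "0 \<le> s"
    using q unfolding s_def by simp
  have "s \<le> a^2 / 4"
  proof -
    have "q * (1 - q) \<le> 1 / 4"
      using zero_le_power2[of "q - 1 / 2"] by (simp add: power2_eq_square algebra_simps)
    then show ?thesis
      unfolding s_def using mult_left_mono[of "q * (1 - q)" "1 / 4" "a^2"] by (simp add: mult.assoc)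
  qed
  also have "a^2 \<le> \<beta>^2"
    using a by (metis abs_ge_zero power2_abs power_mono)
  finally have s_le: "s / 4 \<le> \<beta>^2"
    using s_nonneg by linarith
  have "cmod (centred_bernoulli_char q a u - complex_of_real (exp (- (u^2 * s / 2))))
      \<le> cmod (centred_bernoulli_char q a u - complex_of_real (1 - u^2 * s / 2))
        + cmod (complex_of_real (1 - u^2 * s / 2) - complex_of_real (exp (- (u^2 * s / 2))))"
    by (rule norm_diff_triangle_le[OF order_refl order_refl])
  also have "cmod (centred_bernoulli_char q a u - complex_of_real (1 - u^2 * s / 2))
      \<le> \<bar>u\<bar>^3 * \<bar>a\<bar> * s / 6"
    using norm_centred_bernoulli_char_minus_quadratic_le[OF q] unfolding s_def by simp
  also have "\<dots> \<le> \<bar>u\<bar>^3 * \<beta> * s / 6"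
    using a s_nonneg by (intro divide_right_mono mult_right_mono mult_left_mono) auto
  also have "cmod (complex_of_real (1 - u^2 * s / 2) - complex_of_real (exp (- (u^2 * s / 2))))
      = \<bar>exp (- (u^2 * s / 2)) - (1 - u^2 * s / 2)\<bar>"
    by (metis norm_minus_commute norm_of_real of_real_diff)
  also have "\<dots> \<le> (u^2 * s / 2)^2"
    using s_nonneg by (intro abs_exp_neg_minus_taylor1_le) simp
  also have "\<dots> = u^4 * s * (s / 4)"
    by (simp add: power2_eq_square power4_eq_xxxx field_simps)
  also have "\<dots> \<le> u^4 * s * \<beta>^2"
    using s_le s_nonneg by (intro mult_left_mono) auto
  finally show ?thesis
    by (simp add: algebra_simps)
qed

lemma norm_prod_centred_bernoulli_char_minus_gaussian_le:
  assumes "finite J"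
    and q: "\<And>j. j \<in> J \<Longrightarrow> 0 \<le> q j \<and> q j \<le> 1"
    and a: "\<And>j. j \<in> J \<Longrightarrow> \<bar>a j\<bar> \<le> \<beta>"
    and variance: "(\<Sum>j\<in>J. (a j)^2 * q j * (1 - q j)) = 1"
  shows "cmod ((\<Prod>j\<in>J. centred_bernoulli_char (q j) (a j) u) - complex_of_real (exp (- (u^2) / 2)))
           \<le> \<bar>u\<bar>^3 * \<beta> / 6 + u^4 * \<beta>^2"
proof -
  define s where "s j = (a j)^2 * q j * (1 - q j)" for j
  define g where "g j = complex_of_real (exp (- (u^2 * s j / 2)))" for j
  have "exp (- (u^2) / 2) = exp (\<Sum>j\<in>J. - (u^2 * s j / 2))"
    using variance by (simp add: s_def sum_negf flip: sum_divide_distrib sum_distrib_left)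
  then have "complex_of_real (exp (- (u^2) / 2)) = (\<Prod>j\<in>J. g j)"
    using \<open>finite J\<close> by (simp add: g_def exp_sum)
  then have "cmod ((\<Prod>j\<in>J. centred_bernoulli_char (q j) (a j) u) - complex_of_real (exp (- (u^2) / 2)))
      \<le> (\<Sum>j\<in>J. cmod (centred_bernoulli_char (q j) (a j) u - g j))"
    using q norm_centred_bernoulli_char_le_1
    by (auto intro!: norm_prod_diff simp: g_def s_def)
  also have "\<dots> \<le> (\<Sum>j\<in>J. (\<bar>u\<bar>^3 * \<beta> / 6 + u^4 * \<beta>^2) * s j)"
    using q a unfolding g_def s_def by (intro sum_mono norm_centred_bernoulli_char_minus_gaussian_le) auto
  also have "\<dots> = \<bar>u\<bar>^3 * \<beta> / 6 + u^4 * \<beta>^2"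
    using variance by (simp add: s_def flip: sum_distrib_left)
  finally show ?thesis .
qed

locale indep_bernoulli = prob_space +
  fixes J :: "'j set" and B :: "'j \<Rightarrow> 'a \<Rightarrow> bool" and q :: "'j \<Rightarrow> real"
  assumes finite_J: "finite J"
    and indep_B: "indep_vars (\<lambda>_. count_space UNIV) B J"
    and distr_B: "\<And>j. j \<in> J \<Longrightarrow> distr M (count_space UNIV) (B j) = measure_pmf (bernoulli_pmf (q j))"
    and q_range: "\<And>j. j \<in> J \<Longrightarrow> 0 \<le> q j \<and> q j \<le> 1"
begin

lemma measurable_B: "j \<in> J \<Longrightarrow> B j \<in> measurable M (count_space UNIV)"
  using indep_B unfolding indep_vars_def by auto

lemma indep_vars_fun_B: "indep_vars (\<lambda>_. borel) (\<lambda>j \<omega>. h j (B j \<omega>)) J"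
  by (rule indep_vars_compose2[OF indep_B]) simp

lemma borel_measurable_weighted_sum:
  "(\<lambda>\<omega>. \<Sum>j\<in>J. w j * (of_bool (B j \<omega>) - q j)) \<in> borel_measurable M"
proof (rule borel_measurable_sum)
  fix j assume "j \<in> J"
  show "(\<lambda>\<omega>. w j * (of_bool (B j \<omega>) - q j)) \<in> borel_measurable M"
    using measurable_B[OF \<open>j \<in> J\<close>] by (rule measurable_compose) simp
qed

lemma integral_fun_B:
  fixes g :: "bool \<Rightarrow> 'b::{banach, second_countable_topology}"
  assumes "j \<in> J"
  shows "(\<integral>\<omega>. g (B j \<omega>) \<partial>M) = q j *\<^sub>R g True + (1 - q j) *\<^sub>R g False"
proof -
  have "(\<integral>\<omega>. g (B j \<omega>) \<partial>M) = integral\<^sup>L (distr M (count_space UNIV) (B j)) g"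
    using measurable_B[OF assms] by (simp add: integral_distr)
  also have "\<dots> = (\<Sum>b\<in>UNIV. pmf (bernoulli_pmf (q j)) b *\<^sub>R g b)"
    using assms by (simp add: distr_B integral_measure_pmf[of UNIV])
  also have "\<dots> = q j *\<^sub>R g True + (1 - q j) *\<^sub>R g False"
    using q_range[OF assms] by (simp add: UNIV_bool)
  finally show ?thesis .
qed

lemma prob_abs_weighted_sum_ge_le:
  assumes "0 \<le> e"
  shows "prob {\<omega> \<in> space M. e \<le> \<bar>\<Sum>j\<in>J. w j * (of_bool (B j \<omega>) - q j)\<bar>}
           \<le> 2 * exp (- 2 * e^2 / (\<Sum>j\<in>J. (w j)^2))"
proof (cases "(\<Sum>j\<in>J. (w j)^2) = 0")
  case True
  \<comment> \<open>then the bound is \<open>2 * exp 0\<close>, because \<open>x / 0 = 0\<close>\<close>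
  then show ?thesis
    by (simp add: order_trans[OF prob_le_1])
next
  case False
  then have sum_pos: "0 < (\<Sum>j\<in>J. (w j)^2)"
    by (simp add: order_le_neq_trans sum_nonneg)
  define Y where "Y j \<omega> = w j * (of_bool (B j \<omega>) - q j)" for j \<omega>
  define lo where "lo j = min (- (w j * q j)) (w j * (1 - q j))" for j
  define hi where "hi j = max (- (w j * q j)) (w j * (1 - q j))" for j
  interpret Hoeffding_ineq M J Y lo hi "\<Sum>j\<in>J. expectation (Y j)"
  proof unfold_locales
    show "indep_vars (\<lambda>_. borel) Y J"
      unfolding Y_def by (rule indep_vars_fun_B)
    show "AE \<omega> in M. Y j \<omega> \<in> {lo j..hi j}" for j
      by (intro AE_I2) (auto simp: Y_def lo_def hi_def)
  qed (simp_all add: finite_J)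
  have "expectation (Y j) = 0" if "j \<in> J" for j
    unfolding Y_def using integral_fun_B[OF that, of "\<lambda>b. w j * (of_bool b - q j)"]
    by (simp add: algebra_simps)
  moreover have "(hi j - lo j)^2 = (w j)^2" for j
    by (simp add: lo_def hi_def max_def min_def algebra_simps power2_eq_square)
  ultimately show ?thesis
    using Hoeffding_ineq_abs_ge[OF assms] sum_pos by (simp add: Y_def)
qed

lemma char_weighted_sum:
  "char (distr M borel (\<lambda>\<omega>. \<Sum>j\<in>J. w j * (of_bool (B j \<omega>) - q j))) u
     = (\<Prod>j\<in>J. centred_bernoulli_char (q j) (w j) u)"
proof -
  have "char (distr M borel (\<lambda>\<omega>. \<Sum>j\<in>J. w j * (of_bool (B j \<omega>) - q j))) u
      = (\<Prod>j\<in>J. char (distr M borel (\<lambda>\<omega>. w j * (of_bool (B j \<omega>) - q j))) u)"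
    by (rule char_distr_sum[OF indep_vars_fun_B])
  also have "\<dots> = (\<Prod>j\<in>J. centred_bernoulli_char (q j) (w j) u)"
  proof (rule prod.cong[OF refl])
    fix j assume "j \<in> J"
    have "char (distr M borel (\<lambda>\<omega>. w j * (of_bool (B j \<omega>) - q j))) u
        = (\<integral>\<omega>. iexp (u * (w j * (of_bool (B j \<omega>) - q j))) \<partial>M)"
      unfolding char_def using measurable_B[OF \<open>j \<in> J\<close>] by (simp add: integral_distr)
    also have "\<dots> = centred_bernoulli_char (q j) (w j) u"
      using integral_fun_B[OF \<open>j \<in> J\<close>, of "\<lambda>b. iexp (u * (w j * (of_bool b - q j)))"]
      by (simp add: centred_bernoulli_char_def scaleR_conv_of_real algebra_simps)
    finally show "char (distr M borel (\<lambda>\<omega>. w j * (of_bool (B j \<omega>) - q j))) u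
        = centred_bernoulli_char (q j) (w j) u" .
  qed
  finally show ?thesis .
qed

end

lemma nat_cdf_nonneg: "0 \<le> nat_cdf P k"
  unfolding nat_cdf_def by simp

lemma nat_cdf_le_1: "nat_cdf P k \<le> 1"
  unfolding nat_cdf_def by simp

lemma nat_cdf_mono: "k \<le> l \<Longrightarrow> nat_cdf P k \<le> nat_cdf P l"
  unfolding nat_cdf_def by (rule measure_pmf.finite_measure_mono) auto

definition confirmed_cases :: "(nat \<Rightarrow> nat) \<Rightarrow> nat \<Rightarrow> (nat \<times> nat) set" where
  "confirmed_cases c t = {(d, i). d \<le> t \<and> 1 \<le> i \<and> i \<le> c d}"

definition death_prob :: "(nat \<Rightarrow> real) \<Rightarrow> (nat \<Rightarrow> nat \<Rightarrow> real) \<Rightarrow> nat \<Rightarrow> nat \<Rightarrow> real" where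
  "death_prob p F t d = p d * F d (t - d)"

definition cfr_weight :: "(nat \<Rightarrow> nat) \<Rightarrow> (nat \<Rightarrow> nat \<Rightarrow> real) \<Rightarrow> nat \<Rightarrow> nat \<Rightarrow> real" where
  "cfr_weight c F t d = 1 / (F d (t - d) * real (rcases c t))"

lemma confirmed_cases_eq_Sigma: "confirmed_cases c t = Sigma {..t} (\<lambda>d. {1..c d})"
  unfolding confirmed_cases_def by auto

lemma finite_confirmed_cases [simp]: "finite (confirmed_cases c t)"
  unfolding confirmed_cases_eq_Sigma by auto

lemma card_confirmed_cases: "card (confirmed_cases c t) = rcases c t"
  unfolding confirmed_cases_eq_Sigma rcases_def by (subst card_SigmaI) auto

lemma sum_confirmed_cases:
  "(\<Sum>j\<in>confirmed_cases c t. f j) = (\<Sum>d\<le>t. \<Sum>i=1..c d. f (d, i))"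
  unfolding confirmed_cases_eq_Sigma by (subst sum.Sigma) auto

lemma CFR_est_minus_cfr_true:
  assumes "\<And>d. d \<le> t \<Longrightarrow> F d (t - d) \<noteq> 0"
  shows "CFR_est c F X t \<omega> - cfr_true c p t
           = (\<Sum>j\<in>confirmed_cases c t.
                cfr_weight c F t (fst j) * (of_bool (X t (fst j) (snd j) \<omega>) - death_prob p F t (fst j)))"
proof -
  let ?r = "real (rcases c t)"
  have "(\<Sum>i=1..c d. cfr_weight c F t d * (of_bool (X t d i \<omega>) - death_prob p F t d))
      = (\<Sum>i=1..c d. of_bool (X t d i \<omega>)) / F d (t - d) / ?r - real (c d) * p d / ?r"
    if "d \<le> t" for d
    using assms[OF that]
    by (simp add: cfr_weight_def death_prob_def sum_subtractf right_diff_distrib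
        sum_divide_distrib del: sum_of_bool_eq flip: sum_distrib_left)
  then show ?thesis
    by (simp add: sum_confirmed_cases CFR_est_def cfr_true_def sum_subtractf sum_divide_distrib
        del: sum_of_bool_eq)
qed

lemma V_CFR_eq_sum_cfr_weight:
  assumes "\<And>d. d \<le> t \<Longrightarrow> F d (t - d) \<noteq> 0"
  shows "V_CFR c p F t
           = (\<Sum>j\<in>confirmed_cases c t.
                (cfr_weight c F t (fst j))^2 * death_prob p F t (fst j) * (1 - death_prob p F t (fst j)))"
proof -
  have "(\<Sum>i=1..c d. (cfr_weight c F t d)^2 * death_prob p F t d * (1 - death_prob p F t d))
      = real (c d) * p d * (1 - p d * F d (t - d)) / F d (t - d) / (real (rcases c t))^2"
    if "d \<le> t" for d
    using assms[OF that]
    by (simp add: cfr_weight_def death_prob_def power2_eq_square mult_ac)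
  then show ?thesis
    by (simp add: sum_confirmed_cases V_CFR_def sum_divide_distrib)
qed

lemma V_CFR_ge:
  assumes "0 \<le> I" "S \<le> 1"
    and p: "\<And>d. d \<le> t \<Longrightarrow> I \<le> p d \<and> p d \<le> S"
    and F: "\<And>d. d \<le> t \<Longrightarrow> 0 < F d (t - d) \<and> F d (t - d) \<le> 1"
  shows "I * (1 - S) / real (rcases c t) \<le> V_CFR c p F t"
proof -
  have "real (c d) * (I * (1 - S)) \<le> real (c d) * p d * (1 - p d * F d (t - d)) / F d (t - d)"
    if "d \<le> t" for d
  proof -
    have "p d * F d (t - d) \<le> p d"
      using assms p[OF that] F[OF that] by (simp add: mult_left_le)
    then have "0 \<le> 1 - p d * F d (t - d)" "1 - S \<le> 1 - p d * F d (t - d)"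
      using p[OF that] \<open>S \<le> 1\<close> by auto
    then have "I * (1 - S) \<le> p d * (1 - p d * F d (t - d))"
      using assms p[OF that] by (intro mult_mono) auto
    also have "\<dots> \<le> p d * (1 - p d * F d (t - d)) / F d (t - d)"
      using \<open>0 \<le> 1 - p d * F d (t - d)\<close> assms p[OF that] F[OF that]
      by (simp add: le_divide_eq mult_left_le)
    finally show ?thesis
      by (metis mult_left_mono of_nat_0_le_iff mult.assoc times_divide_eq_right)
  qed
  then have "real (rcases c t) * (I * (1 - S))
      \<le> (\<Sum>d\<le>t. real (c d) * p d * (1 - p d * F d (t - d)) / F d (t - d))"
    unfolding rcases_def of_nat_sum sum_distrib_right by (intro sum_mono) simp
  then have "real (rcases c t) * (I * (1 - S)) / (real (rcases c t))^2 \<le> V_CFR c p F t"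
    unfolding V_CFR_def by (rule divide_right_mono) simp
  then show ?thesis
    by (cases "rcases c t = 0") (simp_all add: power2_eq_square)
qed

locale cfr_model = prob_space M for M :: "'a measure" +
  fixes c :: "nat \<Rightarrow> nat" and p :: "nat \<Rightarrow> real" and Q :: "nat \<Rightarrow> nat pmf"
    and X :: "nat \<Rightarrow> nat \<Rightarrow> nat \<Rightarrow> 'a \<Rightarrow> bool"
  assumes p_range: "\<And>d. 0 \<le> p d \<and> p d \<le> 1"
    and indep: "\<And>t. indep_vars (\<lambda>_. count_space UNIV) (\<lambda>(d, i). X t d i)
                   {(d, i). d \<le> t \<and> 1 \<le> i \<and> i \<le> c d}"
    and bern: "\<And>t d i. d \<le> t \<Longrightarrow> 1 \<le> i \<Longrightarrow> i \<le> c d \<Longrightarrow>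
                 distr M (count_space UNIV) (X t d i)
                   = measure_pmf (bernoulli_pmf (p d * nat_cdf (Q d) (t - d)))"
    and r_infty: "filterlim (rcases c) at_top sequentially"
    and cdf_0_pos: "0 < (INF d. nat_cdf (Q d) 0)"
begin

abbreviation F :: "nat \<Rightarrow> nat \<Rightarrow> real" where
  "F \<equiv> \<lambda>d. nat_cdf (Q d)"

abbreviation D :: real where
  "D \<equiv> INF d. nat_cdf (Q d) 0"

lemma nat_cdf_ge_D: "D \<le> nat_cdf (Q d) k"
proof -
  have "D \<le> nat_cdf (Q d) 0"
    by (rule cINF_lower) (auto intro!: bdd_belowI2[where m = 0] nat_cdf_nonneg)
  also have "\<dots> \<le> nat_cdf (Q d) k"
    by (rule nat_cdf_mono) simp
  finally show ?thesis .
qed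

lemma nat_cdf_pos: "0 < nat_cdf (Q d) k"
  using cdf_0_pos nat_cdf_ge_D by (rule less_le_trans)

lemma nat_cdf_nonzero: "nat_cdf (Q d) k \<noteq> 0"
  using nat_cdf_pos[of d k] by simp

lemma indep_bernoulli_confirmed_cases:
  "indep_bernoulli M (confirmed_cases c t) (\<lambda>j. X t (fst j) (snd j)) (\<lambda>j. death_prob p F t (fst j))"
proof unfold_locales
  show "indep_vars (\<lambda>_. count_space UNIV) (\<lambda>j. X t (fst j) (snd j)) (confirmed_cases c t)"
    using indep[of t] by (simp add: confirmed_cases_def case_prod_beta')
  show "distr M (count_space UNIV) (X t (fst j) (snd j))
          = measure_pmf (bernoulli_pmf (death_prob p F t (fst j)))"
    if "j \<in> confirmed_cases c t" for j
    using that bern[of "fst j" t "snd j"] by (auto simp: confirmed_cases_def death_prob_def)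
  show "0 \<le> death_prob p F t (fst j) \<and> death_prob p F t (fst j) \<le> 1" for j
    using p_range[of "fst j"] nat_cdf_pos[of "fst j" "t - fst j"] nat_cdf_le_1[of "Q (fst j)" "t - fst j"]
    by (auto simp: death_prob_def intro: mult_le_one)
qed simp

lemma CFR_est_minus_cfr_true_eq:
  "CFR_est c F X t \<omega> - cfr_true c p t
     = (\<Sum>j\<in>confirmed_cases c t.
          cfr_weight c F t (fst j) * (of_bool (X t (fst j) (snd j) \<omega>) - death_prob p F t (fst j)))"
  by (intro CFR_est_minus_cfr_true nat_cdf_nonzero)

lemma cfr_weight_le: "cfr_weight c F t d \<le> 1 / (D * real (rcases c t))"
  unfolding cfr_weight_def
  using nat_cdf_ge_D[of d "t - d"] cdf_0_pos
  by (cases "rcases c t = 0") (auto intro!: divide_left_mono mult_pos_pos)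

lemma cfr_weight_nonneg: "0 \<le> cfr_weight c F t d"
  unfolding cfr_weight_def using nat_cdf_pos[of d "t - d"] by simp

lemma sum_cfr_weight_squared_le:
  "(\<Sum>j\<in>confirmed_cases c t. (cfr_weight c F t (fst j))^2) \<le> 1 / (D^2 * real (rcases c t))"
proof -
  have "(\<Sum>j\<in>confirmed_cases c t. (cfr_weight c F t (fst j))^2)
      \<le> (\<Sum>j\<in>confirmed_cases c t. (1 / (D * real (rcases c t)))^2)"
    by (intro sum_mono power_mono cfr_weight_le cfr_weight_nonneg)
  also have "\<dots> = 1 / (D^2 * real (rcases c t))"
    by (cases "rcases c t = 0") (simp_all add: card_confirmed_cases power2_eq_square)
  finally show ?thesis .
qed

lemma prob_abs_CFR_est_minus_cfr_true_gt_le: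
  assumes "0 < rcases c t" "0 \<le> e"
  shows "prob {\<omega> \<in> space M. e < \<bar>CFR_est c F X t \<omega> - cfr_true c p t\<bar>}
           \<le> 2 * exp (- (2 * e^2 * D^2 * real (rcases c t)))"
proof -
  interpret indep_bernoulli M "confirmed_cases c t" "\<lambda>j. X t (fst j) (snd j)" "\<lambda>j. death_prob p F t (fst j)"
    by (rule indep_bernoulli_confirmed_cases)
  define W where "W = (\<Sum>j\<in>confirmed_cases c t. (cfr_weight c F t (fst j))^2)"
  have [measurable]: "(\<lambda>\<omega>. CFR_est c F X t \<omega> - cfr_true c p t) \<in> borel_measurable M"
    unfolding CFR_est_minus_cfr_true_eq by (rule borel_measurable_weighted_sum)
  have "prob {\<omega> \<in> space M. e < \<bar>CFR_est c F X t \<omega> - cfr_true c p t\<bar>}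
      \<le> prob {\<omega> \<in> space M. e \<le> \<bar>CFR_est c F X t \<omega> - cfr_true c p t\<bar>}"
    by (rule finite_measure_mono) auto
  also have "\<dots> \<le> 2 * exp (- 2 * e^2 / W)"
    unfolding W_def CFR_est_minus_cfr_true_eq by (rule prob_abs_weighted_sum_ge_le[OF \<open>0 \<le> e\<close>])
  also have "\<dots> \<le> 2 * exp (- (2 * e^2 * D^2 * real (rcases c t)))"
  proof -
    have "confirmed_cases c t \<noteq> {}"
      using assms card_confirmed_cases[of c t] by auto
    then obtain j where "j \<in> confirmed_cases c t"
      by blast
    then have "0 < W"
      unfolding W_def cfr_weight_def using nat_cdf_pos[of "fst j" "t - fst j"] assms
      by (intro sum_pos2[of _ j]) auto
    then have "D^2 * real (rcases c t) \<le> 1 / W"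
      using sum_cfr_weight_squared_le[of t] cdf_0_pos assms unfolding W_def
      by (simp add: le_divide_eq field_simps)
    then have "2 * e^2 * (D^2 * real (rcases c t)) \<le> 2 * e^2 * (1 / W)"
      by (intro mult_left_mono) auto
    then show ?thesis
      by (simp add: mult.assoc)
  qed
  finally show ?thesis .
qed

lemma eventually_rcases_pos: "\<forall>\<^sub>F t in sequentially. 0 < rcases c t"
  using r_infty unfolding filterlim_at_top by (auto elim: eventually_mono[OF spec[of _ 1]])

lemma filterlim_scaled_rcases_at_top:
  "0 < k \<Longrightarrow> filterlim (\<lambda>t. k * real (rcases c t)) at_top sequentially"
  by (rule filterlim_tendsto_pos_mult_at_top[OF tendsto_const _
        filterlim_compose[OF filterlim_real_sequentially r_infty]])

lemma tendsto_exp_minus_rcases: "0 < k \<Longrightarrow> (\<lambda>t. exp (- (k * real (rcases c t)))) \<longlonglongrightarrow> 0"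
  by (rule filterlim_compose[OF exp_at_bot])
    (simp add: filterlim_scaled_rcases_at_top flip: filterlim_uminus_at_top)

lemma CFR_est_minus_cfr_true_tendsto_0_in_probability:
  assumes "0 < e"
  shows "(\<lambda>t. prob {\<omega> \<in> space M. e < \<bar>CFR_est c F X t \<omega> - cfr_true c p t\<bar>}) \<longlonglongrightarrow> 0"
proof (rule tendsto_sandwich[OF _ _ tendsto_const])
  show "\<forall>\<^sub>F t in sequentially. 0 \<le> prob {\<omega> \<in> space M. e < \<bar>CFR_est c F X t \<omega> - cfr_true c p t\<bar>}"
    by simp
  show "\<forall>\<^sub>F t in sequentially. prob {\<omega> \<in> space M. e < \<bar>CFR_est c F X t \<omega> - cfr_true c p t\<bar>}
          \<le> 2 * exp (- (2 * e^2 * D^2 * real (rcases c t)))"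
    using eventually_rcases_pos
    by eventually_elim (rule prob_abs_CFR_est_minus_cfr_true_gt_le[OF _ less_imp_le[OF assms]])
  show "(\<lambda>t. 2 * exp (- (2 * e^2 * D^2 * real (rcases c t)))) \<longlonglongrightarrow> 0"
    using tendsto_mult_right_zero[OF tendsto_exp_minus_rcases, of "2 * e^2 * D^2" 2] assms cdf_0_pos
    by simp
qed

lemma INF_p_le: "(INF d. p d) \<le> p d"
  by (rule cINF_lower) (auto intro!: bdd_belowI2[where m = 0] simp: p_range)

lemma p_le_SUP: "p d \<le> (SUP d. p d)"
  by (rule cSUP_upper) (auto intro!: bdd_aboveI2[where M = 1] simp: p_range)

lemma V_CFR_ge_INF_SUP:
  "(INF d. p d) * (1 - (SUP d. p d)) / real (rcases c t) \<le> V_CFR c p F t"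
proof (rule V_CFR_ge)
  show "0 \<le> (INF d. p d)"
    using p_range by (intro cINF_greatest) auto
  show "(SUP d. p d) \<le> 1"
    using p_range by (intro cSUP_least) auto
qed (use INF_p_le p_le_SUP nat_cdf_pos nat_cdf_le_1 in auto)

lemma norm_char_standardized_CFR_minus_gaussian_le:
  assumes "0 < (INF d. p d)" "(SUP d. p d) < 1" "0 < rcases c t"
  defines "\<beta> \<equiv> 1 / (D * sqrt ((INF d. p d) * (1 - (SUP d. p d)) * real (rcases c t)))"
  shows "cmod (char (distr M borel (\<lambda>\<omega>. (CFR_est c F X t \<omega> - cfr_true c p t) / sqrt (V_CFR c p F t))) u
             - complex_of_real (exp (- (u^2) / 2)))
           \<le> \<bar>u\<bar>^3 * \<beta> / 6 + u^4 * \<beta>^2"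
proof -
  interpret indep_bernoulli M "confirmed_cases c t" "\<lambda>j. X t (fst j) (snd j)" "\<lambda>j. death_prob p F t (fst j)"
    by (rule indep_bernoulli_confirmed_cases)
  define k where "k = (INF d. p d) * (1 - (SUP d. p d))"
  define r where "r = real (rcases c t)"
  define \<sigma> where "\<sigma> = sqrt (V_CFR c p F t)"
  define a where "a j = cfr_weight c F t (fst j) / \<sigma>" for j :: "nat \<times> nat"
  have "0 < k" "0 < r"
    using assms unfolding k_def r_def by auto
  have "k / r \<le> V_CFR c p F t"
    using V_CFR_ge_INF_SUP unfolding k_def r_def .
  then have "sqrt (r^2 * (k / r)) \<le> sqrt (r^2 * V_CFR c p F t)"
    by (intro real_sqrt_le_mono mult_left_mono) auto
  moreover have "r^2 * (k / r) = k * r"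
    using \<open>0 < r\<close> by (simp add: power2_eq_square)
  moreover have "sqrt (r^2 * V_CFR c p F t) = r * \<sigma>"
    using \<open>0 < r\<close> by (simp add: \<sigma>_def real_sqrt_mult)
  ultimately have r\<sigma>: "sqrt (k * r) \<le> r * \<sigma>"
    by simp
  moreover have "0 < sqrt (k * r)"
    using \<open>0 < k\<close> \<open>0 < r\<close> by simp
  ultimately have "0 < r * \<sigma>"
    by linarith
  then have "0 < \<sigma>"
    using \<open>0 < r\<close> by (simp add: zero_less_mult_iff)
  have char_eq: "char (distr M borel (\<lambda>\<omega>. (CFR_est c F X t \<omega> - cfr_true c p t) / \<sigma>)) u
      = (\<Prod>j\<in>confirmed_cases c t. centred_bernoulli_char (death_prob p F t (fst j)) (a j) u)"
    unfolding CFR_est_minus_cfr_true_eq sum_divide_distrib a_def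
    by (simp add: char_weighted_sum[symmetric])
  have a_le: "\<bar>a j\<bar> \<le> \<beta>" for j
  proof -
    have "\<bar>a j\<bar> = cfr_weight c F t (fst j) / \<sigma>"
      unfolding a_def using cfr_weight_nonneg \<open>0 < \<sigma>\<close> by simp
    also have "\<dots> \<le> 1 / (D * r) / \<sigma>"
      unfolding r_def using \<open>0 < \<sigma>\<close> by (intro divide_right_mono cfr_weight_le) simp
    also have "\<dots> \<le> \<beta>"
      unfolding \<beta>_def k_def[symmetric] r_def[symmetric]
      using r\<sigma> cdf_0_pos \<open>0 < k\<close> \<open>0 < r\<close> \<open>0 < \<sigma>\<close>
      by (simp add: field_simps mult_left_mono)
    finally show ?thesis .
  qed
  have variance: "(\<Sum>j\<in>confirmed_cases c t.
      (a j)^2 * death_prob p F t (fst j) * (1 - death_prob p F t (fst j))) = 1"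
  proof -
    have "V_CFR c p F t = \<sigma>^2"
      using \<open>0 < \<sigma>\<close> unfolding \<sigma>_def by simp
    moreover have "V_CFR c p F t = (\<Sum>j\<in>confirmed_cases c t.
        (cfr_weight c F t (fst j))^2 * death_prob p F t (fst j) * (1 - death_prob p F t (fst j)))"
      by (intro V_CFR_eq_sum_cfr_weight nat_cdf_nonzero)
    ultimately show ?thesis
      using \<open>0 < \<sigma>\<close> by (simp add: a_def power_divide sum_divide_distrib[symmetric])
  qed
  show ?thesis
    unfolding \<sigma>_def[symmetric] char_eq
    by (rule norm_prod_centred_bernoulli_char_minus_gaussian_le) (use q_range a_le variance in auto)
qed

lemma standardized_CFR_weak_conv_std_normal:
  assumes "0 < (INF d. p d)" "(SUP d. p d) < 1"
  shows "weak_conv_m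
           (\<lambda>t. distr M borel (\<lambda>\<omega>. (CFR_est c F X t \<omega> - cfr_true c p t) / sqrt (V_CFR c p F t)))
           std_normal_distribution"
proof (rule levy_continuity)
  fix t
  have "(\<lambda>\<omega>. CFR_est c F X t \<omega> - cfr_true c p t) \<in> borel_measurable M"
    unfolding CFR_est_minus_cfr_true_eq
    by (rule indep_bernoulli.borel_measurable_weighted_sum[OF indep_bernoulli_confirmed_cases])
  then show "real_distribution
      (distr M borel (\<lambda>\<omega>. (CFR_est c F X t \<omega> - cfr_true c p t) / sqrt (V_CFR c p F t)))"
    by simp
next
  fix u :: real
  define k where "k = (INF d. p d) * (1 - (SUP d. p d))"
  define \<beta> where "\<beta> t = 1 / (D * sqrt (k * real (rcases c t)))" for t
  have "0 < k"
    using assms unfolding k_def by simp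
  then have "filterlim (\<lambda>t. D * sqrt (k * real (rcases c t))) at_top sequentially"
    by (intro filterlim_tendsto_pos_mult_at_top[OF tendsto_const cdf_0_pos]
        filterlim_compose[OF sqrt_at_top] filterlim_scaled_rcases_at_top)
  then have "\<beta> \<longlonglongrightarrow> 0"
    unfolding \<beta>_def inverse_eq_divide[symmetric] by (rule tendsto_inverse_0_at_top)
  then have bound_0: "(\<lambda>t. \<bar>u\<bar>^3 * \<beta> t / 6 + u^4 * (\<beta> t)^2) \<longlonglongrightarrow> 0"
    by (auto intro!: tendsto_eq_intros)
  let ?\<phi> = "\<lambda>t. char (distr M borel
      (\<lambda>\<omega>. (CFR_est c F X t \<omega> - cfr_true c p t) / sqrt (V_CFR c p F t))) u"
  have "(\<lambda>t. cmod (?\<phi> t - complex_of_real (exp (- (u^2) / 2)))) \<longlonglongrightarrow> 0"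
  proof (rule tendsto_sandwich[OF _ _ tendsto_const bound_0])
    show "\<forall>\<^sub>F t in sequentially. cmod (?\<phi> t - complex_of_real (exp (- (u^2) / 2)))
        \<le> \<bar>u\<bar>^3 * \<beta> t / 6 + u^4 * (\<beta> t)^2"
      using eventually_rcases_pos
    proof eventually_elim
      case (elim t)
      then show ?case
        unfolding \<beta>_def k_def by (rule norm_char_standardized_CFR_minus_gaussian_le[OF assms])
    qed
  qed simp
  then show "?\<phi> \<longlonglongrightarrow> char std_normal_distribution u"
    by (simp add: char_std_normal_distribution tendsto_norm_zero_iff LIM_zero_iff)
qed (rule real_dist_normal_dist)

end

theorem theorem2:
  fixes M :: "'a measure"
    and c :: "nat \<Rightarrow> nat"
    and p :: "nat \<Rightarrow> real"
    and Q :: "nat \<Rightarrow> nat pmf"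
    and X :: "nat \<Rightarrow> nat \<Rightarrow> nat \<Rightarrow> 'a \<Rightarrow> bool"
  assumes "prob_space M"
    and p_range: "\<And>d. 0 \<le> p d \<and> p d \<le> 1"
    and indep: "\<And>t. prob_space.indep_vars M (\<lambda>_. count_space UNIV) (\<lambda>(d, i). X t d i)
                   {(d, i). d \<le> t \<and> 1 \<le> i \<and> i \<le> c d}"
    and bern: "\<And>t d i. d \<le> t \<Longrightarrow> 1 \<le> i \<Longrightarrow> i \<le> c d \<Longrightarrow>
                 distr M (count_space UNIV) (X t d i)
                   = measure_pmf (bernoulli_pmf (p d * nat_cdf (Q d) (t - d)))"
    and r_infty: "filterlim (rcases c) at_top sequentially"
  shows "((INF d. nat_cdf (Q d) 0) > 0 \<longrightarrow>
           (\<forall>e>0. ((\<lambda>t. measure M {\<omega> \<in> space M.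
                 \<bar>CFR_est c (\<lambda>d. nat_cdf (Q d)) X t \<omega> - cfr_true c p t\<bar> > e}) \<longlonglongrightarrow> 0)))
       \<and> ((INF d. nat_cdf (Q d) 0) > 0 \<and> (INF d. p d) > 0 \<and> (SUP d. p d) < 1 \<longrightarrow>
           weak_conv_m
             (\<lambda>t. distr M borel (\<lambda>\<omega>.
                (CFR_est c (\<lambda>d. nat_cdf (Q d)) X t \<omega> - cfr_true c p t)
                  / sqrt (V_CFR c p (\<lambda>d. nat_cdf (Q d)) t)))
             std_normal_distribution)"
proof (intro conjI impI allI)
  assume "(INF d. nat_cdf (Q d) 0) > 0"
  then interpret cfr_model M c p Q X
    using assms by (simp add: cfr_model_def cfr_model_axioms_def)
  show "(\<lambda>t. measure M {\<omega> \<in> space M.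
          \<bar>CFR_est c (\<lambda>d. nat_cdf (Q d)) X t \<omega> - cfr_true c p t\<bar> > e}) \<longlonglongrightarrow> 0" if "e > 0" for e
    using that by (rule CFR_est_minus_cfr_true_tendsto_0_in_probability)
next
  assume "(INF d. nat_cdf (Q d) 0) > 0 \<and> (INF d. p d) > 0 \<and> (SUP d. p d) < 1"
  then interpret cfr_model M c p Q X
    using assms by (simp add: cfr_model_def cfr_model_axioms_def)
  show "weak_conv_m
          (\<lambda>t. distr M borel (\<lambda>\<omega>.
             (CFR_est c (\<lambda>d. nat_cdf (Q d)) X t \<omega> - cfr_true c p t)
               / sqrt (V_CFR c p (\<lambda>d. nat_cdf (Q d)) t)))
          std_normal_distribution"
    using \<open>_ \<and> _ \<and> _\<close> by (intro standardized_CFR_weak_conv_std_normal) auto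
qed

end
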